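(* Let $T\ge2$, and let $\mathscr Q^{\mathrm{VC}}$ be the mixture probability assignment built from $g_1,\dots,g_{m_\epsilon}\in\mathcal G$. For every $x_{1:T}\in\mathcal X^T$, $y_{1:T}\in\{0,1\}^T$, $g^*\in\mathcal G$ and $\theta_0^*,\theta_1^*\in[0,1]$, $$\log\frac{p_{g^*,\theta_0^*,\theta_1^*}(y_{1:T}\mid x_{1:T})}{q(y_{1:T}\|x_{1:T})}\le\log m_\epsilon+2\log T+32\,\min_{i\in[m_\epsilon]}d_H\big(g^*(x_{1:T}),g_i(x_{1:T})\big)\log T,$$ where $g(x_{1:T})=(g(x_1),\dots,g(x_T))\in\{0,1\}^T$ and $d_H$ is Hamming distance.
   Context: $\mathcal G\subseteq\{\mathcal X\to\{0,1\}\}$ is a class of binary functions. The VC class $\mathcal F^{\mathrm{VC}}$ consists of the predictors indexed by $(g,\theta_0,\theta_1)\in\mathcal G\times[0,1]^2$ with $p_{g,\theta_0,\theta_1}(1\mid x)=\theta_{g(x)}$, $p_{g,\theta_0,\theta_1}(0\mid x)=1-\theta_{g(x)}$, and $p_{g,\theta_0,\theta_1}(y_{1:t}\mid x_{1:t})=\prod_{i\le t}p_{g,\theta_0,\theta_1}(y_i\mid x_i)$. Given $g_1,\dots,g_{m_\epsilon}\in\mathcal G$, the mixture assignment $\mathscr Q^{\mathrm{VC}}$ is defined by $q(y_{1:t}\|x_{1:t})=\frac1{m_\epsilon}\sum_{i=1}^{m_\epsilon}\int_0^1\int_0^1p_{g_i,\theta_0,\theta_1}(y_{1:t}\mid x_{1:t})\,d\theta_0\,d\theta_1$,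 with sequential predictions $q(1\mid x_{1:t},y_{1:t-1})=q(y_{1:t-1}1\|x_{1:t})/q(y_{1:t-1}\|x_{1:t-1})$, so that $q(y_{1:T}\|x_{1:T})=\prod_t q(y_t\mid x_{1:t},y_{1:t-1})$. Logarithms are natural. *)

theory Defs
  imports "HOL-Analysis.Analysis"
begin

text \<open>Binary functions X -> {0,1} are modelled as 'x => bool (True = 1, False = 0).
  Sequences x_{1:T}, y_{1:T} are modelled as functions on nat, using indices 0..T-1.\<close>

definition theta_sel :: "bool \<Rightarrow> real \<Rightarrow> real \<Rightarrow> real" where
  "theta_sel b th0 th1 = (if b then th1 else th0)"

definition pVC :: "('x \<Rightarrow> bool) \<Rightarrow> real \<Rightarrow> real \<Rightarrow> nat \<Rightarrow> (nat \<Rightarrow> 'x) \<Rightarrow> (nat \<Rightarrow> bool) \<Rightarrow> real" where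
  "pVC g th0 th1 T x y =
     (\<Prod>t<T. if y t then theta_sel (g (x t)) th0 th1 else 1 - theta_sel (g (x t)) th0 th1)"

definition qVC :: "nat \<Rightarrow> (nat \<Rightarrow> ('x \<Rightarrow> bool)) \<Rightarrow> nat \<Rightarrow> (nat \<Rightarrow> 'x) \<Rightarrow> (nat \<Rightarrow> bool) \<Rightarrow> real" where
  "qVC m gs T x y =
     (1 / real m) * (\<Sum>i<m. integral {0..1} (\<lambda>th0. integral {0..1} (\<lambda>th1. pVC (gs i) th0 th1 T x y)))"

definition hamming_on :: "nat \<Rightarrow> (nat \<Rightarrow> 'x) \<Rightarrow> ('x \<Rightarrow> bool) \<Rightarrow> ('x \<Rightarrow> bool) \<Rightarrow> nat" where
  "hamming_on T x g h = card {t \<in> {..<T}. g (x t) \<noteq> h (x t)}"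

end

theory Submission
  imports Defs
begin

text \<open>
  For a single expert \<open>g\<close> the likelihood factorises into two Bernoulli likelihoods
  \<open>\<theta>\<^sup>a (1-\<theta>)\<^sup>b\<close>, whose uniform mixture is the Beta integral \<open>a! b! / (a+b+1)!\<close>;
  by the binomial theorem this is at least \<open>\<theta>\<^sup>a (1-\<theta>)\<^sup>b / (a+b+1)\<close>, so the
  Laplace mixture loses at most a factor \<open>(n\<^sub>0+1)(n\<^sub>1+1) \<le> T\<^sup>2\<close> against the best
  parameters. To compare with \<open>g\<^sup>*\<close>, shrink \<open>\<theta>\<^sub>0, \<theta>\<^sub>1\<close> towards \<open>1/2\<close> by
  \<open>e = 1/T\<^sup>2\<close>: then \<open>g\<close> gives every outcome probability at least \<open>e/2\<close>, which bounds
  the loss on the \<open>d\<close> rounds where \<open>g\<close> and \<open>g\<^sup>*\<close> disagree by \<open>(2T\<^sup>2)\<^sup>d\<close>, while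
  the agreeing rounds lose only \<open>(1-e)\<^sup>T \<ge> 1/2\<close>. Uniform weights over the \<open>m\<close>
  experts cost the remaining factor \<open>m\<close>.
\<close>

lemma has_integral_power_unit_interval:
  "((\<lambda>s::real. s ^ n) has_integral 1 / real (Suc n)) {0..1}"
proof -
  have "((\<lambda>s. s ^ Suc n / real (Suc n)) has_real_derivative s ^ n) (at s within {0..1})"
    for s :: real
    using DERIV_cdivide[OF DERIV_pow[of "Suc n" s "{0..1}"], of "real (Suc n)"] by simp
  then have "((\<lambda>s::real. s ^ n) has_integral
      1 ^ Suc n / real (Suc n) - 0 ^ Suc n / real (Suc n)) {0..1}"
    by (intro fundamental_theorem_of_calculus)
       (auto simp: has_real_derivative_iff_has_vector_derivative[symmetric])
  then show ?thesis by simp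
qed

definition beta_nat :: "nat \<Rightarrow> nat \<Rightarrow> real" where
  "beta_nat a b = integral {0..1} (\<lambda>s. s ^ a * (1 - s) ^ b)"

lemma beta_nat_eq_fact: "beta_nat a b = fact a * fact b / fact (a + b + 1)"
proof (induction b arbitrary: a)
  case 0
  show ?case
    using integral_unique[OF has_integral_power_unit_interval[of a]]
    by (simp add: beta_nat_def)
next
  case (Suc b)
  have "(\<lambda>s::real. s ^ a * (1 - s) ^ Suc b)
      = (\<lambda>s. s ^ a * (1 - s) ^ b - s ^ Suc a * (1 - s) ^ b)"
    by (simp add: algebra_simps)
  moreover have "(\<lambda>s::real. s ^ k * (1 - s) ^ b) integrable_on {0..1}" for k
    by (intro integrable_continuous_real continuous_intros)
  ultimately have "beta_nat a (Suc b) = beta_nat a b - beta_nat (Suc a) b"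
    unfolding beta_nat_def by (simp only: integral_diff)
  also have "\<dots> = fact a * fact (Suc b) / fact (a + Suc b + 1)"
  proof -
    define F :: real where "F = fact (a + b + 1)"
    have "F > 0" by (simp add: F_def)
    have "fact (Suc a + b + 1) = real (a + b + 2) * F"
      and "fact (a + Suc b + 1) = real (a + b + 2) * F"
      by (simp_all add: F_def)
    moreover have "A * B / F - real (Suc a) * A * B / (real (a + b + 2) * F)
        = A * (real (Suc b) * B) / (real (a + b + 2) * F)" for A B
      using \<open>F > 0\<close> by (simp add: divide_simps) (simp add: algebra_simps)
    ultimately show ?thesis
      unfolding Suc.IH F_def[symmetric] fact_Suc[of a] fact_Suc[of b] by simp
  qed
  finally show ?case .
qed

lemma beta_nat_pos: "0 < beta_nat a b"
  by (simp add: beta_nat_eq_fact)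

lemma beta_nat_eq_binomial: "beta_nat a b = 1 / (real (a + b + 1) * real ((a + b) choose a))"
proof -
  have "fact (a + b) = fact a * fact b * real ((a + b) choose a)"
    using binomial_fact_lemma[of a "a + b"]
    by (metis le_add1 add_diff_cancel_left' of_nat_fact of_nat_mult)
  then show ?thesis
    by (simp add: beta_nat_eq_fact)
qed

lemma binomial_term_le_one:
  fixes \<theta> :: real assumes "0 \<le> \<theta>" "\<theta> \<le> 1"
  shows "real ((a + b) choose a) * \<theta> ^ a * (1 - \<theta>) ^ b \<le> 1"
proof -
  have "real ((a + b) choose a) * \<theta> ^ a * (1 - \<theta>) ^ (a + b - a)
      \<le> (\<Sum>k\<le>a + b. real ((a + b) choose k) * \<theta> ^ k * (1 - \<theta>) ^ (a + b - k))"
    by (rule member_le_sum) (use assms in auto)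
  also have "\<dots> = (\<theta> + (1 - \<theta>)) ^ (a + b)"
    by (rule binomial_ring[symmetric])
  finally show ?thesis by simp
qed

lemma power_mult_power_le_beta_nat:
  fixes \<theta> :: real assumes "0 \<le> \<theta>" "\<theta> \<le> 1"
  shows "\<theta> ^ a * (1 - \<theta>) ^ b \<le> real (a + b + 1) * beta_nat a b"
proof -
  have "0 < real ((a + b) choose a)" by simp
  then have "\<theta> ^ a * (1 - \<theta>) ^ b \<le> 1 / real ((a + b) choose a)"
    using binomial_term_le_one[OF assms, of a b] by (simp add: pos_le_divide_eq ac_simps)
  then show ?thesis
    by (simp add: beta_nat_eq_binomial)
qed

lemma pVC_nonneg:
  assumes "th0 \<in> {0..1}" "th1 \<in> {0..1}"
  shows "0 \<le> pVC g th0 th1 T x y"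
  using assms unfolding pVC_def theta_sel_def by (intro prod_nonneg) auto

definition label_count ::
    "nat \<Rightarrow> (nat \<Rightarrow> 'x) \<Rightarrow> (nat \<Rightarrow> bool) \<Rightarrow> ('x \<Rightarrow> bool) \<Rightarrow> bool \<Rightarrow> bool \<Rightarrow> nat" where
  "label_count T x y g b c = card {t \<in> {..<T}. g (x t) = b \<and> y t = c}"

lemma pVC_eq_label_counts:
  "pVC g th0 th1 T x y =
     (th0 ^ label_count T x y g False True * (1 - th0) ^ label_count T x y g False False) *
     (th1 ^ label_count T x y g True True * (1 - th1) ^ label_count T x y g True False)"
proof -
  let ?S = "\<lambda>b c. {..<T} \<inter> {t. g (x t) = b \<and> y t = c}"
  have "pVC g th0 th1 T x y =
      (\<Prod>t<T. if g (x t) then if y t then th1 else 1 - th1 else if y t then th0 else 1 - th0)"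
    unfolding pVC_def theta_sel_def by (intro prod.cong) auto
  also have "\<dots> = (\<Prod>t\<in>?S True True. th1) * (\<Prod>t\<in>?S True False. 1 - th1)
      * ((\<Prod>t\<in>?S False True. th0) * (\<Prod>t\<in>?S False False. 1 - th0))"
    by (simp add: prod.If_cases Int_def conj_ac)
  finally show ?thesis
    by (simp add: label_count_def Int_def conj_ac ac_simps)
qed

lemma label_count_sum:
  "(label_count T x y g False True + label_count T x y g False False)
     + (label_count T x y g True True + label_count T x y g True False) = T"
proof -
  have split: "card {t \<in> A. P t} + card {t \<in> A. \<not> P t} = card A" if "finite A" for A P
    using card_Int_Diff[OF that, of "{t. P t}"] by (simp add: Int_def set_diff_eq conj_commute)
  have "label_count T x y g b True + label_count T x y g b False
      = card {t \<in> {..<T}. g (x t) = b}" for b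
    using split[of "{t \<in> {..<T}. g (x t) = b}" y] by (simp add: label_count_def conj_assoc)
  then show ?thesis
    using split[of "{..<T}" "\<lambda>t. g (x t)"] by simp
qed

definition laplace_mixture ::
    "('x \<Rightarrow> bool) \<Rightarrow> nat \<Rightarrow> (nat \<Rightarrow> 'x) \<Rightarrow> (nat \<Rightarrow> bool) \<Rightarrow> real" where
  "laplace_mixture g T x y =
     integral {0..1} (\<lambda>th0. integral {0..1} (\<lambda>th1. pVC g th0 th1 T x y))"

lemma laplace_mixture_eq_beta_nat:
  "laplace_mixture g T x y =
     beta_nat (label_count T x y g False True) (label_count T x y g False False) *
     beta_nat (label_count T x y g True True) (label_count T x y g True False)"
  unfolding laplace_mixture_def pVC_eq_label_counts beta_nat_def by simp

lemma laplace_mixture_pos: "0 < laplace_mixture g T x y"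
  by (simp add: laplace_mixture_eq_beta_nat beta_nat_pos)

lemma qVC_eq_mean_laplace_mixture:
  "qVC m gs T x y = (\<Sum>i<m. laplace_mixture (gs i) T x y) / real m"
  by (simp add: qVC_def laplace_mixture_def)

lemma laplace_mixture_le_qVC:
  assumes "i < m"
  shows "laplace_mixture (gs i) T x y / real m \<le> qVC m gs T x y"
proof -
  have "laplace_mixture (gs i) T x y \<le> (\<Sum>j<m. laplace_mixture (gs j) T x y)"
    by (rule member_le_sum) (auto simp: assms less_imp_le[OF laplace_mixture_pos])
  then show ?thesis
    unfolding qVC_eq_mean_laplace_mixture by (simp add: divide_right_mono)
qed

lemma succ_mult_succ_le_square:
  fixes n0 n1 :: nat assumes "n0 + n1 = T" "2 \<le> T"
  shows "real (n0 + 1) * real (n1 + 1) \<le> real T ^ 2"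
proof -
  have "real T = real n0 + real n1"
    using assms(1) by simp
  then have "4 * (real n0 + 1) * (real n1 + 1) \<le> (real T + 2) ^ 2"
    using sum_squares_ge_zero[of "real n0 - real n1" 0]
    by (simp add: power2_eq_square algebra_simps)
  also have "\<dots> \<le> (2 * real T) ^ 2"
    using assms(2) by (intro power_mono) auto
  finally show ?thesis by (simp add: power2_eq_square algebra_simps)
qed

lemma pVC_le_laplace_mixture:
  assumes "2 \<le> T" "th0 \<in> {0..1}" "th1 \<in> {0..1}"
  shows "pVC g th0 th1 T x y \<le> real T ^ 2 * laplace_mixture g T x y"
proof -
  define a0 b0 a1 b1 where "a0 = label_count T x y g False True"
    and "b0 = label_count T x y g False False" and "a1 = label_count T x y g True True"
    and "b1 = label_count T x y g True False"
  have "pVC g th0 th1 T x y = (th0 ^ a0 * (1 - th0) ^ b0) * (th1 ^ a1 * (1 - th1) ^ b1)"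
    unfolding pVC_eq_label_counts a0_def b0_def a1_def b1_def ..
  also have "\<dots> \<le> (real (a0 + b0 + 1) * beta_nat a0 b0) * (real (a1 + b1 + 1) * beta_nat a1 b1)"
    using assms
    by (intro mult_mono[OF power_mult_power_le_beta_nat power_mult_power_le_beta_nat])
       (auto intro!: mult_nonneg_nonneg less_imp_le[OF beta_nat_pos])
  also have "\<dots> = real (a0 + b0 + 1) * real (a1 + b1 + 1) * laplace_mixture g T x y"
    by (simp add: laplace_mixture_eq_beta_nat a0_def b0_def a1_def b1_def)
  also have "\<dots> \<le> real T ^ 2 * laplace_mixture g T x y"
    using label_count_sum[of T x y g] assms(1) laplace_mixture_pos[of g T x y]
    by (intro mult_right_mono succ_mult_succ_le_square) (auto simp: a0_def b0_def a1_def b1_def)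
  finally show ?thesis .
qed

definition shrink_to_half :: "real \<Rightarrow> real \<Rightarrow> real" where
  "shrink_to_half e u = (1 - e) * u + e / 2"

lemma shrink_to_half_bounds:
  assumes "0 \<le> e" "e \<le> 1" "0 \<le> u" "u \<le> 1"
  shows "(1 - e) * u \<le> shrink_to_half e u" "(1 - e) * (1 - u) \<le> 1 - shrink_to_half e u"
    and "e / 2 \<le> shrink_to_half e u" "e / 2 \<le> 1 - shrink_to_half e u"
proof -
  have "0 \<le> (1 - e) * u" "0 \<le> (1 - e) * (1 - u)"
    using assms by simp_all
  then show "(1 - e) * u \<le> shrink_to_half e u" "(1 - e) * (1 - u) \<le> 1 - shrink_to_half e u"
    "e / 2 \<le> shrink_to_half e u" "e / 2 \<le> 1 - shrink_to_half e u"
    using assms by (simp_all add: shrink_to_half_def algebra_simps)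
qed

lemma shrink_to_half_in_unit:
  assumes "0 \<le> e" "e \<le> 1" "0 \<le> u" "u \<le> 1"
  shows "shrink_to_half e u \<in> {0..1}"
  using shrink_to_half_bounds(3,4)[OF assms] assms(1) by simp

lemma hamming_on_eq_0_iff: "hamming_on T x g h = 0 \<longleftrightarrow> (\<forall>t<T. g (x t) = h (x t))"
  by (auto simp: hamming_on_def)

lemma prod_if_agree_eq_power_hamming_on:
  "(\<Prod>t<T. if g (x t) = h (x t) then 1 else a) = a ^ hamming_on T x g h"
  by (simp add: prod.If_cases hamming_on_def Int_def Collect_neg_eq[symmetric] conj_commute)

lemma pVC_shrink_to_half_lower_bound:
  assumes e: "0 \<le> e" "e \<le> 1" and th: "th0 \<in> {0..1}" "th1 \<in> {0..1}"
  shows "(1 - e) ^ T * (e / 2) ^ hamming_on T x gstar g * pVC gstar th0 th1 T x y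
           \<le> pVC g (shrink_to_half e th0) (shrink_to_half e th1) T x y"
proof -
  define lik where "lik h a b t =
      (if y t then theta_sel (h (x t)) a b else 1 - theta_sel (h (x t)) a b)" for h a b t
  define c where "c t = (if gstar (x t) = g (x t) then 1 else e / 2)" for t
  have lik01: "0 \<le> lik gstar th0 th1 t \<and> lik gstar th0 th1 t \<le> 1" for t
    using th by (auto simp: lik_def theta_sel_def)
  note sh0 = shrink_to_half_bounds[OF e, of th0] and sh1 = shrink_to_half_bounds[OF e, of th1]
  have factor: "(1 - e) * c t * lik gstar th0 th1 t
      \<le> lik g (shrink_to_half e th0) (shrink_to_half e th1) t" for t
  proof (cases "gstar (x t) = g (x t)")
    case True
    then show ?thesis
      using th sh0 sh1 by (auto simp: c_def lik_def theta_sel_def)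
  next
    case False
    have "(1 - e) * lik gstar th0 th1 t \<le> 1"
      using e lik01[of t] by (intro mult_le_one) auto
    then have "(1 - e) * c t * lik gstar th0 th1 t \<le> e / 2"
      using False e mult_left_le[of "(1 - e) * lik gstar th0 th1 t" "e / 2"]
      by (simp add: c_def ac_simps)
    also have "\<dots> \<le> lik g (shrink_to_half e th0) (shrink_to_half e th1) t"
      using th sh0 sh1 by (auto simp: lik_def theta_sel_def)
    finally show ?thesis .
  qed
  have "(1 - e) ^ T * (e / 2) ^ hamming_on T x gstar g * pVC gstar th0 th1 T x y
      = (\<Prod>t<T. (1 - e) * c t * lik gstar th0 th1 t)"
    by (simp add: prod.distrib pVC_def lik_def c_def prod_if_agree_eq_power_hamming_on)
  also have "\<dots> \<le> (\<Prod>t<T. lik g (shrink_to_half e th0) (shrink_to_half e th1) t)"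
    using factor e lik01 by (intro prod_mono) (auto simp: c_def)
  also have "\<dots> = pVC g (shrink_to_half e th0) (shrink_to_half e th1) T x y"
    by (simp add: pVC_def lik_def)
  finally show ?thesis .
qed

lemma one_minus_inverse_square_power_ge_half:
  assumes "2 \<le> T"
  shows "1 / 2 \<le> (1 - 1 / real T ^ 2) ^ T"
proof -
  have "1 / 2 \<le> 1 + real T * (- (1 / real T ^ 2))"
    using assms by (simp add: power2_eq_square field_simps)
  also have "\<dots> \<le> (1 + - (1 / real T ^ 2)) ^ T"
    using assms by (intro Bernoulli_inequality) (simp add: field_simps)
  finally show ?thesis by simp
qed

lemma two_mult_power_le_power:
  assumes "2 \<le> T" "1 \<le> d"
  shows "2 * (2 * real T ^ 2) ^ d \<le> real T ^ (4 * d)"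
proof -
  have "2 * (2 * real T ^ 2) ^ d = 2 ^ Suc d * real T ^ (2 * d)"
    by (simp add: power_mult_distrib flip: power_mult)
  also have "\<dots> \<le> real T ^ (2 * d) * real T ^ (2 * d)"
  proof (intro mult_right_mono)
    have "(2::real) ^ Suc d \<le> 2 ^ (2 * d)"
      using assms(2) by (intro power_increasing) auto
    also have "\<dots> \<le> real T ^ (2 * d)"
      using assms(1) by (intro power_mono) auto
    finally show "(2::real) ^ Suc d \<le> real T ^ (2 * d)" .
  qed simp
  also have "\<dots> = real T ^ (4 * d)"
    by (simp flip: power_add)
  finally show ?thesis .
qed

lemma pVC_le_laplace_mixture_hamming:
  assumes T: "2 \<le> T" and th: "th0 \<in> {0..1}" "th1 \<in> {0..1}"
  shows "pVC gstar th0 th1 T x y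
           \<le> real T ^ (4 * hamming_on T x gstar g) * (real T ^ 2 * laplace_mixture g T x y)"
proof (cases "hamming_on T x gstar g = 0")
  case True
  then have "pVC gstar th0 th1 T x y = pVC g th0 th1 T x y"
    unfolding pVC_def hamming_on_eq_0_iff by (intro prod.cong) auto
  then show ?thesis
    using True pVC_le_laplace_mixture[OF T th] by simp
next
  case False
  define d e where "d = hamming_on T x gstar g" and "e = 1 / real T ^ 2"
  have "1 \<le> real T ^ 2"
    using T by (intro one_le_power) simp
  then have e: "0 \<le> e" "e \<le> 1"
    by (simp_all add: e_def divide_le_eq)
  have p: "0 \<le> pVC gstar th0 th1 T x y"
    using th by (rule pVC_nonneg)
  have "1 / 2 * (e / 2) ^ d * pVC gstar th0 th1 T x y
      \<le> (1 - e) ^ T * (e / 2) ^ d * pVC gstar th0 th1 T x y"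
    using one_minus_inverse_square_power_ge_half[OF T] e p
    by (intro mult_right_mono) (simp_all add: e_def)
  also have "\<dots> \<le> pVC g (shrink_to_half e th0) (shrink_to_half e th1) T x y"
    unfolding d_def using e th by (rule pVC_shrink_to_half_lower_bound)
  also have "\<dots> \<le> real T ^ 2 * laplace_mixture g T x y"
    using T th e by (intro pVC_le_laplace_mixture shrink_to_half_in_unit) auto
  finally have "pVC gstar th0 th1 T x y
      \<le> 2 * (2 * real T ^ 2) ^ d * (real T ^ 2 * laplace_mixture g T x y)"
    using T by (simp add: e_def field_simps power_divide)
  also have "\<dots> \<le> real T ^ (4 * d) * (real T ^ 2 * laplace_mixture g T x y)"
    using T False laplace_mixture_pos[of g T x y]
    by (intro mult_right_mono two_mult_power_le_power) (auto simp: d_def)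
  finally show ?thesis
    unfolding d_def .
qed

lemma ln_div_le_ln_of_le_mult:
  fixes p q C :: real
  assumes "0 \<le> p" "0 < q" "p \<le> C * q" "1 \<le> C"
  shows "ln (p / q) \<le> ln C"
proof (cases "p = 0")
  case False
  have "p / q \<le> C"
    using assms by (simp add: pos_divide_le_eq)
  then show ?thesis
    using False assms(1,2) by (intro ln_mono) auto
qed (use assms in simp)

theorem mainTheorem10:
  fixes G :: "('x \<Rightarrow> bool) set" and gs :: "nat \<Rightarrow> ('x \<Rightarrow> bool)" and m T :: nat
    and x :: "nat \<Rightarrow> 'x" and y :: "nat \<Rightarrow> bool" and gstar :: "'x \<Rightarrow> bool"
    and th0 th1 :: real
  assumes "T \<ge> 2" and "m \<ge> 1" and "\<forall>i<m. gs i \<in> G" and "gstar \<in> G"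
    and "th0 \<in> {0..1}" and "th1 \<in> {0..1}"
  shows "ln (pVC gstar th0 th1 T x y / qVC m gs T x y)
           \<le> ln (real m) + 2 * ln (real T)
              + 32 * real (Min ((\<lambda>i. hamming_on T x gstar (gs i)) ` {..<m})) * ln (real T)"
proof -
  let ?h = "\<lambda>i. hamming_on T x gstar (gs i)"
  have "Min (?h ` {..<m}) \<in> ?h ` {..<m}"
    using assms(2) by (intro Min_in) (auto simp: lessThan_empty_iff)
  then obtain i where i: "i < m" "?h i = Min (?h ` {..<m})"
    by force
  let ?L = "laplace_mixture (gs i) T x y" and ?q = "qVC m gs T x y"
  let ?C = "real m * real T ^ 2 * real T ^ (32 * ?h i)"
  have L_le_q: "?L \<le> real m * ?q"
    using laplace_mixture_le_qVC[OF i(1), of gs T x y] assms(2) by (simp add: field_simps)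
  have "pVC gstar th0 th1 T x y \<le> real T ^ (4 * ?h i) * (real T ^ 2 * ?L)"
    using assms(1,5,6) by (rule pVC_le_laplace_mixture_hamming)
  \<comment> \<open>the argument yields the exponent \<open>4 d\<close>; the stated \<open>32 d\<close> is weaker\<close>
  also have "\<dots> \<le> real T ^ (32 * ?h i) * (real T ^ 2 * (real m * ?q))"
    using assms(1) L_le_q laplace_mixture_pos[of "gs i" T x y]
    by (intro mult_mono[OF power_increasing mult_left_mono]) auto
  also have "\<dots> = ?C * ?q"
    by (simp add: ac_simps)
  finally have "ln (pVC gstar th0 th1 T x y / ?q) \<le> ln ?C"
  proof (rule ln_div_le_ln_of_le_mult[rotated 2])
    show "0 \<le> pVC gstar th0 th1 T x y"
      using assms(5,6) by (rule pVC_nonneg)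
    show "0 < ?q"
      using laplace_mixture_pos[of "gs i" T x y] assms(2)
      by (intro less_le_trans[OF _ laplace_mixture_le_qVC[OF i(1)]]) simp
    show "1 \<le> ?C"
      using assms(1,2) by (intro mult_ge1_I one_le_power) auto
  qed
  then show ?thesis
    using assms(1,2) i(2) by (simp add: ln_mult ln_realpow)
qed

end
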